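(* Let $q\ge2$, $n\ge2$, $m=n-1$ and $R\in[m]$. Then $$\min_{{\boldsymbol y}\in\Sigma_{q,R}^m}\mathsf{H}^{\mathsf{In}}_{1\text{-}\mathsf{Del}}({\boldsymbol y})=\log_2(nq)-\frac{(m-R+2)\log_2(m-R+2)+2(R-1)}{nq},$$ and the minimum is attained only by skewed channel outputs.
   Context: $\Sigma_q=\{0,\dots,q-1\}$. For sequences ${\boldsymbol x}$ of length $N$ and ${\boldsymbol y}$ of length $\ell\le N$, $\omega_{{\boldsymbol y}}({\boldsymbol x})$ is the number of index tuples $1\le i_1<\dots<i_\ell\le N$ with $x_{i_j}=y_j$. The $1$-deletion channel with input length $n$ maps ${\boldsymbol x}\in\Sigma_q^n$ to ${\boldsymbol y}\in\Sigma_q^{n-1}$ with probability $\omega_{{\boldsymbol y}}({\boldsymbol x})/n$; under uniform transmission ($X$ uniform on $\Sigma_q^n$), $\mathsf{H}^{\mathsf{In}}_{1\text{-}\mathsf{Del}}({\boldsymbol y})=H(X\mid Y={\boldsymbol y})$ in bits, with posterior $P({\boldsymbol x}\mid {\boldsymbol y})=\Pr\{{\boldsymbol y}\mid{\boldsymbol x}\}/\sum_{{\boldsymbol x}'}\Pr\{{\boldsymbol y}\mid{\boldsymbol x}'\}$. A run is a maximal block of identical consecutive symbols; $\Sigma_{q,R}^m$ is the set of sequences in $\Sigma_q^m$ with exactly $R$ runs. A sequence in $\Sigma_{q,R}^m$ is skewed if it has $R-1$ runs of length one and one run of length $m-(R-1)$. *)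

theory Defs
  imports Main "HOL-Library.Multiset" Complex_Main
begin

definition seqs :: "nat \<Rightarrow> nat \<Rightarrow> nat list set" where
  "seqs q n = {xs. length xs = n \<and> set xs \<subseteq> {..<q}}"

definition omega :: "nat list \<Rightarrow> nat list \<Rightarrow> nat" where
  "omega y x = card {I. I \<subseteq> {..<length x} \<and> card I = length y \<and> nths x I = y}"

text \<open>1-deletion channel with input length n: Pr{y | x} = omega_y(x) / n.\<close>
definition del_prob :: "nat \<Rightarrow> nat list \<Rightarrow> nat list \<Rightarrow> real" where
  "del_prob n y x = real (omega y x) / real n"

text \<open>Posterior P(x | y) under uniform input on Sigma_q^n.\<close>
definition posterior :: "nat \<Rightarrow> nat \<Rightarrow> nat list \<Rightarrow> nat list \<Rightarrow> real" where
  "posterior q n y x = del_prob n y x / (\<Sum>x'\<in>seqs q n. del_prob n y x')"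

definition H_in_1del :: "nat \<Rightarrow> nat \<Rightarrow> nat list \<Rightarrow> real" where
  "H_in_1del q n y = - (\<Sum>x\<in>seqs q n.
      (if posterior q n y x = 0 then 0
       else posterior q n y x * log 2 (posterior q n y x)))"

fun runs :: "'a list \<Rightarrow> 'a list list" where
  "runs [] = []"
| "runs (x # xs) = (case runs xs of
       [] \<Rightarrow> [[x]]
     | r # rs \<Rightarrow> (if hd r = x then (x # r) # rs else [x] # r # rs))"

definition seqs_runs :: "nat \<Rightarrow> nat \<Rightarrow> nat \<Rightarrow> nat list set" where
  "seqs_runs q R m = {y \<in> seqs q m. length (runs y) = R}"

definition skewed :: "nat \<Rightarrow> nat list \<Rightarrow> bool" where
  "skewed R y = (mset (map length (runs y)) =
       replicate_mset (R - 1) 1 + {# length y - (R - 1) #})"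

end

theory Submission
  imports Defs
begin

text \<open>
  Under uniform input the posterior of \<open>x\<close> given \<open>y\<close> is proportional to
  \<open>\<omega>\<^sub>y(x)\<close>. Summed over all \<open>x\<close> these weights give \<open>nq\<close> (one for each
  choice of an inserted symbol and its position), and \<open>\<omega>\<^sub>y(x) \<ge> 2\<close> happens
  only when \<open>x\<close> lengthens a run of \<open>y\<close>, of length \<open>r\<close> say, and then
  \<open>\<omega>\<^sub>y(x) = r + 1\<close>. Hence
  \<open>H(X | Y = y) = log(nq) - (\<Sum> runs (r+1) log(r+1)) / nq\<close>.
  Writing each run length as \<open>r = 1 + t\<close>, the map \<open>t \<mapsto> (t+2) log(t+2) - 2\<close> is
  strictly convex and vanishes at 0, hence strictly superadditive; so for a fixed
  number of runs the sum over the runs is largest, and the entropy smallest,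
  exactly when all the excess length sits in a single run.
\<close>

subsection \<open>Counting embeddings of subsequences\<close>

definition occurrences :: "'a list \<Rightarrow> 'a list \<Rightarrow> nat set set" where
  "occurrences y x = {I. I \<subseteq> {..<length x} \<and> card I = length y \<and> nths x I = y}"

lemma omega_eq_card_occurrences: "omega y x = card (occurrences y x)"
  unfolding omega_def occurrences_def ..

lemma occurrences_Nil: "occurrences [] x = {{}}"
proof -
  have "card I = 0 \<longleftrightarrow> I = {}" if "I \<subseteq> {..<length x}" for I
    using finite_subset[OF that finite_lessThan] by simp
  then show ?thesis unfolding occurrences_def by auto
qed

lemma occurrences_longer:
  assumes "length x < length y"
  shows "occurrences y x = {}"
proof -
  have "I \<notin> occurrences y x" for I
  proof
    assume "I \<in> occurrences y x"
    then have "I \<subseteq> {..<length x}" "card I = length y"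
      unfolding occurrences_def by auto
    then show False
      using card_mono[of "{..<length x}" I] assms by simp
  qed
  then show ?thesis
    by blast
qed

lemma Suc_image_vimage: "Suc ` (Suc -` I) = I - {0}"
  using not0_implies_Suc by blast

lemma insert_0_Suc_image_vimage: "0 \<in> I \<Longrightarrow> insert 0 (Suc ` (Suc -` I)) = I"
  unfolding Suc_image_vimage by blast

lemma Suc_image_vimage_if_0_notin: "0 \<notin> I \<Longrightarrow> Suc ` (Suc -` I) = I"
  unfolding Suc_image_vimage by blast

lemma inj_Suc_image: "inj (\<lambda>J. Suc ` J)"
  by (rule inj_on_inverseI[of _ "\<lambda>I. Suc -` I"]) auto

lemma inj_insert_0_Suc_image: "inj (\<lambda>J. insert 0 (Suc ` J))"
  by (rule inj_on_inverseI[of _ "\<lambda>I. Suc -` I"]) auto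

lemma Suc_image_subset_lessThan_Suc: "Suc ` J \<subseteq> {..<Suc n} \<longleftrightarrow> J \<subseteq> {..<n}"
  by auto

lemma card_insert_0_Suc_image: "finite J \<Longrightarrow> card (insert 0 (Suc ` J)) = Suc (card J)"
  by (simp add: card_image)

lemma nths_Cons_Suc_image: "nths (b # xs) (Suc ` J) = nths xs J"
  by (simp add: nths_Cons image_iff)

lemma nths_Cons_insert_0: "nths (b # xs) (insert 0 (Suc ` J)) = b # nths xs J"
  by (simp add: nths_Cons image_iff)

lemma occurrences_Cons_Cons:
  "occurrences (a # ys) (b # xs) =
     (\<lambda>J. Suc ` J) ` occurrences (a # ys) xs \<union>
     (if a = b then (\<lambda>J. insert 0 (Suc ` J)) ` occurrences ys xs else {})"
  (is "?A = ?B0 \<union> ?B1")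
proof (rule set_eqI)
  fix I
  show "I \<in> ?A \<longleftrightarrow> I \<in> ?B0 \<union> ?B1"
  proof (cases "0 \<in> I")
    case True
    then obtain J where I: "I = insert 0 (Suc ` J)"
      using insert_0_Suc_image_vimage by metis
    have "I \<subseteq> {..<Suc (length xs)} \<longleftrightarrow> J \<subseteq> {..<length xs}"
      by (simp add: I Suc_image_subset_lessThan_Suc)
    moreover have "card I = Suc (card J)" if "J \<subseteq> {..<length xs}"
      using I card_insert_0_Suc_image finite_subset[OF that finite_lessThan] by simp
    moreover have "nths (b # xs) I = a # ys \<longleftrightarrow> a = b \<and> nths xs J = ys"
      by (auto simp: I nths_Cons_insert_0)
    ultimately have "I \<in> ?A \<longleftrightarrow> a = b \<and> J \<in> occurrences ys xs"
      unfolding occurrences_def mem_Collect_eq length_Cons by auto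
    moreover have "I \<in> ?B0 \<union> ?B1 \<longleftrightarrow> a = b \<and> J \<in> occurrences ys xs"
      by (auto simp: I inj_image_mem_iff[OF inj_insert_0_Suc_image])
    ultimately show ?thesis by blast
  next
    case False
    then obtain J where I: "I = Suc ` J"
      using Suc_image_vimage_if_0_notin by metis
    have "I \<in> ?A \<longleftrightarrow> J \<in> occurrences (a # ys) xs"
      by (simp add: I occurrences_def Suc_image_subset_lessThan_Suc nths_Cons_Suc_image card_image)
    moreover have "I \<in> ?B0 \<union> ?B1 \<longleftrightarrow> J \<in> occurrences (a # ys) xs"
      by (auto simp: I inj_image_mem_iff[OF inj_Suc_image])
    ultimately show ?thesis by blast
  qed
qed

lemma omega_Nil: "omega [] x = 1"
  by (simp add: omega_eq_card_occurrences occurrences_Nil)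

lemma omega_longer: "length x < length y \<Longrightarrow> omega y x = 0"
  by (simp add: omega_eq_card_occurrences occurrences_longer)

lemma omega_Cons_Cons:
  "omega (a # ys) (b # xs) = omega (a # ys) xs + (if a = b then omega ys xs else 0)"
proof -
  have finite: "finite (occurrences y x)" for y x :: "nat list"
    unfolding occurrences_def by (rule finite_subset[of _ "Pow {..<length x}"]) auto
  have disjoint: "(\<lambda>J. Suc ` J) ` S \<inter> (\<lambda>J. insert 0 (Suc ` J)) ` T = {}" for S T
    by auto
  show ?thesis
    unfolding omega_eq_card_occurrences occurrences_Cons_Cons
    using disjoint finite
    by (simp add: card_Un_disjoint card_image inj_on_subset[OF inj_Suc_image]
        inj_on_subset[OF inj_insert_0_Suc_image])
qed

lemma omega_same_length: "length x = length y \<Longrightarrow> omega y x = (if x = y then 1 else 0)"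
proof (induction x arbitrary: y)
  case Nil
  then show ?case by (simp add: omega_Nil)
next
  case (Cons b xs)
  then obtain a ys where "y = a # ys"
    by (cases y) auto
  with Cons show ?case
    by (auto simp: omega_Cons_Cons omega_longer)
qed

lemma omega_Cons_self: "omega ys (a # ys) = Suc (length (takeWhile (\<lambda>x. x = a) ys))"
  by (induction ys) (simp_all add: omega_Nil omega_Cons_Cons omega_same_length omega_longer)

lemma finite_seqs: "finite (seqs q k)"
  using finite_lists_length_eq[of "{..<q}" k] unfolding seqs_def by (simp add: conj_commute)

lemma seqs_0: "seqs q 0 = {[]}"
  unfolding seqs_def by auto

lemma sum_seqs_Suc: "(\<Sum>x\<in>seqs q (Suc k). g x) = (\<Sum>b<q. \<Sum>xs\<in>seqs q k. g (b # xs))"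
proof -
  have seqs_Suc: "seqs q (Suc k) = (\<lambda>(b, xs). b # xs) ` ({..<q} \<times> seqs q k)"
    unfolding seqs_def by (auto simp: length_Suc_conv image_iff)
  have "inj_on (\<lambda>(b, xs). b # xs) ({..<q} \<times> seqs q k)"
    by (auto simp: inj_on_def)
  then show ?thesis
    unfolding seqs_Suc by (simp add: sum.reindex sum.cartesian_product case_prod_unfold)
qed

lemma omega_Cons_Cons_same_length:
  "length xs = Suc (length ys) \<Longrightarrow>
   omega (a # ys) (b # xs) = (if xs = a # ys then 1 else 0) + (if a = b then omega ys xs else 0)"
  by (simp add: omega_Cons_Cons omega_same_length)

lemma sum_omega: "set y \<subseteq> {..<q} \<Longrightarrow> (\<Sum>x\<in>seqs q (Suc (length y)). omega y x) = q * Suc (length y)"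
proof (induction y)
  case Nil
  then show ?case
    by (subst sum_seqs_Suc) (simp add: seqs_0 omega_Nil)
next
  case (Cons a ys)
  then have a: "a < q" and ys: "a # ys \<in> seqs q (Suc (length ys))"
    unfolding seqs_def by auto
  have "(\<Sum>x\<in>seqs q (Suc (length (a # ys))). omega (a # ys) x)
      = (\<Sum>b<q. \<Sum>xs\<in>seqs q (Suc (length ys)).
           (if xs = a # ys then 1 else 0) + (if a = b then omega ys xs else 0))"
    unfolding length_Cons sum_seqs_Suc
    by (intro sum.cong refl) (simp add: seqs_def omega_Cons_Cons_same_length)
  also have "\<dots> = (\<Sum>b<q. 1 + (if a = b then q * Suc (length ys) else 0))"
  proof (intro sum.cong refl)
    fix b
    have "(\<Sum>xs\<in>seqs q (Suc (length ys)). if a = b then omega ys xs else 0)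
        = (if a = b then q * Suc (length ys) else 0)"
      using Cons.IH Cons.prems by simp
    then show "(\<Sum>xs\<in>seqs q (Suc (length ys)).
        (if xs = a # ys then 1 else 0) + (if a = b then omega ys xs else 0))
        = 1 + (if a = b then q * Suc (length ys) else 0)"
      using ys by (simp add: sum.distrib finite_seqs)
  qed
  also have "\<dots> = q * Suc (length (a # ys))"
    using a by (simp only: sum.distrib) simp
  finally show ?case .
qed

lemma runs_eq_takeWhile_Cons:
  "xs \<noteq> [] \<Longrightarrow> \<exists>rs. runs xs = takeWhile (\<lambda>x. x = hd xs) xs # rs"
proof (induction xs)
  case (Cons c xs)
  show ?case
  proof (cases xs)
    case (Cons d xs')
    with Cons.IH obtain rs where "runs xs = takeWhile (\<lambda>x. x = d) xs # rs"
      by auto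
    with Cons show ?thesis
      by (cases "d = c") auto
  qed simp
qed simp

lemma concat_runs: "concat (runs xs) = xs"
  by (induction xs) (auto split: list.split)

lemma Nil_notin_runs: "[] \<notin> set (runs xs)"
  by (induction xs) (auto split: list.split_asm if_splits)

lemma runs_Cons_neq_hd: "xs \<noteq> [] \<Longrightarrow> a \<noteq> hd xs \<Longrightarrow> runs (a # xs) = [a] # runs xs"
  using runs_eq_takeWhile_Cons[of xs] by (cases xs) auto

lemma runs_replicate: "0 < k \<Longrightarrow> runs (replicate k a) = [replicate k a]"
proof (induction k)
  case (Suc k)
  then show ?case by (cases k) auto
qed simp

subsection \<open>The posterior entropy in terms of runs\<close>

text \<open>Since \<open>ln 0 = 0\<close> in Isabelle, \<open>xlogx 0 = 0\<close>, the usual convention \<open>0 log 0 = 0\<close>.\<close>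

definition xlogx :: "nat \<Rightarrow> real" where
  "xlogx k = real k * log 2 (real k)"

definition runs_xlogx :: "'a list \<Rightarrow> real" where
  "runs_xlogx xs = (\<Sum>r\<leftarrow>runs xs. xlogx (Suc (length r)))"

lemma xlogx_0 [simp]: "xlogx 0 = 0" and xlogx_Suc_0 [simp]: "xlogx (Suc 0) = 0"
  by (simp_all add: xlogx_def)

lemma runs_xlogx_Cons:
  "runs_xlogx (a # ys) = runs_xlogx ys
     + xlogx (length (takeWhile (\<lambda>x. x = a) ys) + 2) - xlogx (length (takeWhile (\<lambda>x. x = a) ys) + 1)"
proof (cases ys)
  case (Cons c ys')
  then obtain rs where "runs ys = takeWhile (\<lambda>x. x = c) ys # rs"
    using runs_eq_takeWhile_Cons[of ys] by auto
  with Cons show ?thesis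
    by (cases "c = a") (simp_all add: runs_xlogx_def)
qed (simp add: runs_xlogx_def)

lemma sum_xlogx_omega:
  "set y \<subseteq> {..<q} \<Longrightarrow> (\<Sum>x\<in>seqs q (Suc (length y)). xlogx (omega y x)) = runs_xlogx y"
proof (induction y)
  case Nil
  then show ?case
    by (subst sum_seqs_Suc) (simp add: seqs_0 omega_Nil runs_xlogx_def)
next
  case (Cons a ys)
  then have a: "a < q" and ys: "a # ys \<in> seqs q (Suc (length ys))"
    unfolding seqs_def by auto
  define k where "k = length (takeWhile (\<lambda>x. x = a) ys)"
  define \<delta> where "\<delta> = xlogx (k + 2) - xlogx (k + 1)"
  have split_head: "xlogx ((if xs = a # ys then 1 else 0) + (if a = b then omega ys xs else 0))
      = (if a = b then xlogx (omega ys xs) + (if xs = a # ys then \<delta> else 0) else 0)" for b xs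
    using omega_Cons_self[of ys a] unfolding \<delta>_def k_def by auto
  have "(\<Sum>x\<in>seqs q (Suc (length (a # ys))). xlogx (omega (a # ys) x))
      = (\<Sum>b<q. \<Sum>xs\<in>seqs q (Suc (length ys)).
           xlogx ((if xs = a # ys then 1 else 0) + (if a = b then omega ys xs else 0)))"
    unfolding length_Cons sum_seqs_Suc
    by (intro sum.cong refl) (simp add: seqs_def omega_Cons_Cons_same_length)
  also have "\<dots> = (\<Sum>b<q. if a = b then runs_xlogx ys + \<delta> else 0)"
    unfolding split_head using Cons ys by (intro sum.cong) (auto simp: sum.distrib finite_seqs)
  also have "\<dots> = runs_xlogx ys + \<delta>"
    using a by simp
  finally show ?case
    unfolding \<delta>_def k_def by (simp add: runs_xlogx_Cons)
qed

lemma H_in_1del_eq_runs_xlogx: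
  assumes y: "set y \<subseteq> {..<q}" and q: "0 < q"
  shows "H_in_1del q (Suc (length y)) y =
     log 2 (real (Suc (length y) * q)) - runs_xlogx y / real (Suc (length y) * q)"
proof -
  define n where "n = Suc (length y)"
  define N where "N = real (n * q)"
  have "0 < n * q"
    using q unfolding n_def by simp
  then have N: "N > 0"
    unfolding N_def by simp
  have sum_omega_N: "(\<Sum>x\<in>seqs q n. real (omega y x)) = N"
    using sum_omega[OF y] unfolding N_def n_def of_nat_sum[symmetric] by (simp add: mult.commute)
  have posterior: "posterior q n y x = omega y x / N" for x
  proof -
    have "(\<Sum>x'\<in>seqs q n. del_prob n y x') = N / n"
      unfolding del_prob_def sum_divide_distrib[symmetric] sum_omega_N ..
    then show ?thesis
      unfolding posterior_def del_prob_def N_def n_def by simp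
  qed
  have entropy_term: "(if posterior q n y x = 0 then 0 else posterior q n y x * log 2 (posterior q n y x))
      = xlogx (omega y x) / N - omega y x / N * log 2 N" for x
  proof (cases "omega y x = 0")
    case False
    then have "log 2 (omega y x / N) = log 2 (omega y x) - log 2 N"
      using N by (simp add: log_divide)
    with False N show ?thesis
      unfolding posterior xlogx_def by (simp add: right_diff_distrib)
  qed (simp add: posterior xlogx_def)
  have "H_in_1del q n y = - (\<Sum>x\<in>seqs q n. xlogx (omega y x) / N - omega y x / N * log 2 N)"
    unfolding H_in_1del_def entropy_term ..
  also have "\<dots> = log 2 N - runs_xlogx y / N"
    using N sum_omega_N sum_xlogx_omega[OF y]
    by (simp add: n_def sum_subtractf sum_divide_distrib[symmetric] sum_distrib_right[symmetric])
  finally show ?thesis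
    unfolding n_def N_def .
qed

subsection \<open>Strict convexity and superadditivity\<close>

lemma ln_less_minus_one: "0 < (x::real) \<Longrightarrow> x \<noteq> 1 \<Longrightarrow> ln x < x - 1"
  using ln_le_minus_one[of x] ln_eq_minus_one[of x] by fastforce

lemma diff_less_mult_ln_diff:
  fixes a b :: real
  assumes "0 \<le> a" and "0 < b" and "a \<noteq> b"
  shows "a - b < a * ln a - a * ln b"
proof (cases "a = 0")
  case False
  with assms have "ln (b / a) < b / a - 1"
    by (intro ln_less_minus_one) auto
  then have "a * ln (b / a) < a * (b / a - 1)"
    using False assms by simp
  with False assms show ?thesis
    by (simp add: ln_div right_diff_distrib)
qed (use assms in simp)

lemma xlogx_strict_convex: "2 * xlogx (Suc k) < xlogx k + xlogx (Suc (Suc k))"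
proof -
  define x where "x = real k"
  have "x - (x + 1) < x * ln x - x * ln (x + 1)"
    by (rule diff_less_mult_ln_diff) (auto simp: x_def)
  moreover have "(x + 2) - (x + 1) < (x + 2) * ln (x + 2) - (x + 2) * ln (x + 1)"
    by (rule diff_less_mult_ln_diff) (auto simp: x_def)
  ultimately have "2 * ((x + 1) * ln (x + 1)) < x * ln x + (x + 2) * ln (x + 2)"
    by (simp add: algebra_simps)
  then show ?thesis
    unfolding xlogx_def log_def x_def
    by (simp add: add_divide_distrib[symmetric] add_ac divide_strict_right_mono)
qed

lemma superadditive_if_strict_mono_increments:
  fixes h :: "nat \<Rightarrow> 'a::linordered_ab_group_add"
  assumes mono: "strict_mono (\<lambda>k. h (Suc k) - h k)" and "h 0 = 0" and "0 < s" and "0 < t"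
  shows "h s + h t < h (s + t)"
  using \<open>0 < t\<close>
proof (induction t rule: nat_induct_non_zero)
  case 1
  have "h 1 - h 0 < h (Suc s) - h s"
    using strict_monoD[OF mono \<open>0 < s\<close>] by simp
  with \<open>h 0 = 0\<close> show ?case
    by (simp add: algebra_simps)
next
  case (Suc t)
  have "h (Suc t) - h t < h (Suc (s + t)) - h (s + t)"
    using strict_monoD[OF mono, of t "s + t"] \<open>0 < s\<close> by simp
  from add_strict_mono[OF Suc.IH this] show ?case
    by (simp add: algebra_simps)
qed

lemma superadditive_nonstrict:
  fixes h :: "nat \<Rightarrow> 'a::linordered_ab_group_add"
  assumes "h 0 = 0" and "\<And>s t. 0 < s \<Longrightarrow> 0 < t \<Longrightarrow> h s + h t < h (s + t)"
  shows "h s + h t \<le> h (s + t)"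
  using assms by (cases "s = 0"; cases "t = 0") (auto intro: less_imp_le)

lemma sum_list_map_le_superadditive:
  fixes h :: "nat \<Rightarrow> 'a::linordered_ab_group_add"
  assumes "h 0 = 0" and super: "\<And>s t. 0 < s \<Longrightarrow> 0 < t \<Longrightarrow> h s + h t < h (s + t)"
  shows "sum_list (map h ts) \<le> h (sum_list ts)"
proof (induction ts)
  case (Cons t ts)
  have "sum_list (map h (t # ts)) = h t + sum_list (map h ts)"
    by simp
  also have "\<dots> \<le> h t + h (sum_list ts)"
    using Cons.IH by (rule add_left_mono)
  also have "\<dots> \<le> h (t + sum_list ts)"
    using assms by (rule superadditive_nonstrict)
  finally show ?case
    by simp
qed (simp add: \<open>h 0 = 0\<close>)

lemma mset_eq_if_sum_list_map_eq_superadditive: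
  fixes h :: "nat \<Rightarrow> 'a::linordered_ab_group_add"
  assumes h0: "h 0 = 0" and super: "\<And>s t. 0 < s \<Longrightarrow> 0 < t \<Longrightarrow> h s + h t < h (s + t)"
    and "ts \<noteq> []" and "sum_list (map h ts) = h (sum_list ts)"
  shows "mset ts = replicate_mset (length ts - 1) 0 + {#sum_list ts#}"
  using assms(3,4)
proof (induction ts rule: list_nonempty_induct)
  case (cons t ts)
  define S where "S = sum_list ts"
  have "sum_list (map h ts) \<le> h S"
    unfolding S_def using h0 super by (rule sum_list_map_le_superadditive)
  then have "h t + sum_list (map h ts) \<le> h t + h S"
    by (rule add_left_mono)
  moreover have "h t + h S \<le> h (t + S)"
    using h0 super by (rule superadditive_nonstrict)
  moreover have eq: "h t + sum_list (map h ts) = h (t + S)"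
    using cons.prems unfolding S_def by simp
  ultimately have merge_eq: "h t + h S = h (t + S)"
    by (metis antisym)
  with eq have "sum_list (map h ts) = h S"
    by (metis add_left_cancel)
  with cons.IH have IH: "mset ts = replicate_mset (length ts - 1) 0 + {#S#}"
    unfolding S_def by simp
  from merge_eq super[of t S] have "t = 0 \<or> S = 0"
    by auto
  then show ?case
  proof
    assume "t = 0"
    with IH \<open>ts \<noteq> []\<close> show ?thesis
      unfolding S_def by (cases ts) auto
  next
    assume "S = 0"
    with IH \<open>ts \<noteq> []\<close> have "mset ts = replicate_mset (length ts) 0"
      by (cases ts) auto
    with \<open>S = 0\<close> show ?thesis
      unfolding S_def by simp
  qed
qed simp

lemma sum_list_map_eq_superadditive_iff:
  fixes h :: "nat \<Rightarrow> 'a::linordered_ab_group_add"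
  assumes h0: "h 0 = 0" and super: "\<And>s t. 0 < s \<Longrightarrow> 0 < t \<Longrightarrow> h s + h t < h (s + t)"
    and "ts \<noteq> []"
  shows "sum_list (map h ts) = h (sum_list ts) \<longleftrightarrow>
    mset ts = replicate_mset (length ts - 1) 0 + {#sum_list ts#}"
proof
  assume "mset ts = replicate_mset (length ts - 1) 0 + {#sum_list ts#}"
  then have "sum_mset (image_mset h (mset ts)) = h (sum_list ts)"
    using h0 by (simp add: sum_mset.neutral)
  then show "sum_list (map h ts) = h (sum_list ts)"
    by (simp flip: sum_mset_sum_list mset_map)
qed (use assms mset_eq_if_sum_list_map_eq_superadditive in blast)

lemma sum_list_xlogx_bound:
  assumes "ts \<noteq> []"
  defines "B \<equiv> 2 * real (length ts - 1) + xlogx (sum_list ts + 2)"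
  shows "(\<Sum>t\<leftarrow>ts. xlogx (t + 2)) \<le> B"
    and "(\<Sum>t\<leftarrow>ts. xlogx (t + 2)) = B \<longleftrightarrow>
      mset ts = replicate_mset (length ts - 1) 0 + {#sum_list ts#}"
proof -
  define h where "h t = xlogx (t + 2) - 2" for t
  have h0: "h 0 = 0"
    by (simp add: h_def xlogx_def)
  have "strict_mono (\<lambda>k. h (Suc k) - h k)"
    using xlogx_strict_convex
    by (intro strict_mono_Suc_iff[THEN iffD2] allI) (simp add: h_def algebra_simps)
  then have super: "h s + h t < h (s + t)" if "0 < s" "0 < t" for s t
    using h0 that by (rule superadditive_if_strict_mono_increments)
  have sum_eq: "(\<Sum>t\<leftarrow>ts. xlogx (t + 2)) = sum_list (map h ts) + 2 * real (length ts)"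
    by (induction ts) (simp_all add: h_def)
  have B_eq: "B = h (sum_list ts) + 2 * real (length ts)"
    using assms by (cases ts) (simp_all add: B_def h_def algebra_simps)
  show "(\<Sum>t\<leftarrow>ts. xlogx (t + 2)) \<le> B"
    using sum_list_map_le_superadditive[OF h0 super] sum_eq B_eq by simp
  show "(\<Sum>t\<leftarrow>ts. xlogx (t + 2)) = B \<longleftrightarrow>
      mset ts = replicate_mset (length ts - 1) 0 + {#sum_list ts#}"
    using sum_list_map_eq_superadditive_iff[OF h0 super assms(1)] sum_eq B_eq by simp
qed

lemma runs_xlogx_bound:
  assumes "y \<noteq> []"
  defines "B \<equiv> 2 * real (length (runs y) - 1) + xlogx (length y - length (runs y) + 2)"
  shows "runs_xlogx y \<le> B" and "runs_xlogx y = B \<longleftrightarrow> skewed (length (runs y)) y"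
proof -
  define ts where "ts = map (\<lambda>r. length r - 1) (runs y)"
  have "0 < length r" if "r \<in> set (runs y)" for r
    using Nil_notin_runs[of y] that by (cases r) auto
  then have lengths: "map length (runs y) = map Suc ts"
    unfolding ts_def by (simp add: map_eq_conv)
  have "runs y \<noteq> []"
    using assms concat_runs[of y] by auto
  then have ts: "ts \<noteq> []" "length ts = length (runs y)"
    unfolding ts_def by simp_all
  have "sum_list (map Suc ts) = sum_list ts + length ts"
    by (induction ts) simp_all
  then have length_y: "length y = sum_list ts + length ts"
    using length_concat[of "runs y"] by (simp add: concat_runs lengths)
  have runs_xlogx_ts: "runs_xlogx y = (\<Sum>t\<leftarrow>ts. xlogx (t + 2))"
  proof -
    have "runs_xlogx y = (\<Sum>l\<leftarrow>map length (runs y). xlogx (Suc l))"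
      by (simp add: runs_xlogx_def comp_def)
    then show ?thesis
      by (simp add: lengths comp_def)
  qed
  have B_ts: "B = 2 * real (length ts - 1) + xlogx (sum_list ts + 2)"
    unfolding B_def ts(2)[symmetric] length_y by simp
  have "length y - (length (runs y) - 1) = Suc (sum_list ts)"
    using length_y ts by (cases ts) auto
  then have "skewed (length (runs y)) y \<longleftrightarrow>
      image_mset Suc (mset ts) = image_mset Suc (replicate_mset (length ts - 1) 0 + {#sum_list ts#})"
    unfolding skewed_def lengths ts(2) by (simp add: mset_map)
  also have "\<dots> \<longleftrightarrow> mset ts = replicate_mset (length ts - 1) 0 + {#sum_list ts#}"
    by (metis (no_types) multiset.inj_map_strong nat.inject)
  finally have skewed_ts:
    "skewed (length (runs y)) y \<longleftrightarrow> mset ts = replicate_mset (length ts - 1) 0 + {#sum_list ts#}" .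
  show "runs_xlogx y \<le> B"
    unfolding runs_xlogx_ts B_ts using ts(1) by (rule sum_list_xlogx_bound)
  show "runs_xlogx y = B \<longleftrightarrow> skewed (length (runs y)) y"
    unfolding runs_xlogx_ts B_ts skewed_ts using ts(1) by (rule sum_list_xlogx_bound)
qed

lemma exists_binary_skewed:
  assumes "0 < L"
  shows "\<exists>z\<in>seqs 2 (j + L). mset (map length (runs z)) = replicate_mset j 1 + {#L#}"
proof (induction j)
  case 0
  show ?case
    using assms by (intro bexI[of _ "replicate L 0"]) (auto simp: seqs_def runs_replicate)
next
  case (Suc j)
  then obtain z where z: "z \<in> seqs 2 (j + L)"
    and runs_z: "mset (map length (runs z)) = replicate_mset j 1 + {#L#}"
    by blast
  have "z \<noteq> []"
    using z assms unfolding seqs_def by auto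
  then have "hd z < 2"
    using z hd_in_set unfolding seqs_def by blast
  then have "1 - hd z \<noteq> hd z"
    by arith
  with \<open>z \<noteq> []\<close> have "runs ((1 - hd z) # z) = [1 - hd z] # runs z"
    by (rule runs_Cons_neq_hd)
  moreover have "(1 - hd z) # z \<in> seqs 2 (Suc j + L)"
    using z unfolding seqs_def by auto
  ultimately show ?case
    using runs_z by (intro bexI[of _ "(1 - hd z) # z"]) auto
qed

lemma exists_skewed_seqs_runs:
  assumes "2 \<le> q" and "0 < R" and "R \<le> m"
  shows "\<exists>y\<in>seqs_runs q R m. skewed R y"
proof -
  obtain z where z: "z \<in> seqs 2 (R - 1 + (m - R + 1))"
    and runs_z: "mset (map length (runs z)) = replicate_mset (R - 1) 1 + {#m - R + 1#}"
    using exists_binary_skewed[of "m - R + 1" "R - 1"] by auto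
  have "length (runs z) = R"
    using arg_cong[OF runs_z, of size] assms by simp
  moreover have "z \<in> seqs q m"
    using z assms unfolding seqs_def by auto
  ultimately show ?thesis
    using runs_z assms z unfolding seqs_runs_def skewed_def seqs_def by (intro bexI[of _ z]) auto
qed

lemma H_in_1del_seqs_runs_bound:
  assumes "0 < q" and "0 < m" and y: "y \<in> seqs_runs q R m"
  defines "V \<equiv> log 2 (real (Suc m * q))
    - (real (m - R + 2) * log 2 (real (m - R + 2)) + 2 * real (R - 1)) / real (Suc m * q)"
  shows "V \<le> H_in_1del q (Suc m) y" and "H_in_1del q (Suc m) y = V \<longleftrightarrow> skewed R y"
proof -
  have y_props: "set y \<subseteq> {..<q}" "length y = m" "length (runs y) = R"
    using y unfolding seqs_runs_def seqs_def by auto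
  then have "y \<noteq> []"
    using \<open>0 < m\<close> by auto
  define N where "N = real (Suc m * q)"
  define B where "B = 2 * real (R - 1) + xlogx (m - R + 2)"
  have "N > 0"
    using assms unfolding N_def of_nat_0_less_iff by simp
  have H: "H_in_1del q (Suc m) y = log 2 N - runs_xlogx y / N"
    using H_in_1del_eq_runs_xlogx[OF y_props(1) \<open>0 < q\<close>] y_props unfolding N_def by simp
  have V: "V = log 2 N - B / N"
    unfolding V_def N_def B_def xlogx_def by (simp add: algebra_simps)
  have "runs_xlogx y \<le> B" and B_iff: "runs_xlogx y = B \<longleftrightarrow> skewed R y"
    using runs_xlogx_bound[OF \<open>y \<noteq> []\<close>] y_props unfolding B_def by simp_all
  then show "V \<le> H_in_1del q (Suc m) y"
    unfolding H V using \<open>N > 0\<close> by (simp add: divide_right_mono)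
  show "H_in_1del q (Suc m) y = V \<longleftrightarrow> skewed R y"
    unfolding H V B_iff[symmetric] using \<open>N > 0\<close> by auto
qed

theorem lemma8:
  fixes q n m R :: nat
  assumes "q \<ge> 2" and "n \<ge> 2" and "m = n - 1" and "1 \<le> R" and "R \<le> m"
  shows "Min (H_in_1del q n ` seqs_runs q R m) =
           log 2 (real (n * q))
           - (real (m - R + 2) * log 2 (real (m - R + 2)) + 2 * real (R - 1)) / real (n * q)
     \<and> (\<forall>y\<in>seqs_runs q R m. H_in_1del q n y = Min (H_in_1del q n ` seqs_runs q R m)
           \<longrightarrow> skewed R y)"
proof -
  define V where "V = log 2 (real (n * q))
    - (real (m - R + 2) * log 2 (real (m - R + 2)) + 2 * real (R - 1)) / real (n * q)"
  have "n = Suc m" "0 < q" "0 < m"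
    using assms by auto
  then have bound: "V \<le> H_in_1del q n y" "H_in_1del q n y = V \<longleftrightarrow> skewed R y"
    if "y \<in> seqs_runs q R m" for y
    using H_in_1del_seqs_runs_bound[OF _ _ that] unfolding V_def by simp_all
  obtain z where "z \<in> seqs_runs q R m" "skewed R z"
    using exists_skewed_seqs_runs assms by (metis One_nat_def Suc_le_eq)
  moreover have "finite (seqs_runs q R m)"
    using finite_seqs unfolding seqs_runs_def by simp
  ultimately have "Min (H_in_1del q n ` seqs_runs q R m) = V"
    using bound by (intro Min_eqI) auto
  with bound show ?thesis
    unfolding V_def by simp
qed

end
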